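(* Let $\mathbf P\in\mathbb{R}^{n\times n}$ be symmetric positive definite and $\mathbf c\in\mathbb{R}^n$, and let $\ell^*_{\mathbf c,\mathbf P}=\sup_{\beta\in\mathcal{I}_{\mathbf P}}\ell_{\mathbf c,\mathbf P}(\beta)$, with $\ell_{\mathbf c,\mathbf P}$ and $\mathcal{I}_{\mathbf P}$ as defined below. Then $$\mathcal{E}(\mathbf c,\mathbf P)\subseteq \operatorname{int}\mathcal{B}(\mathbf 0,1)\iff \ell^*_{\mathbf c,\mathbf P}>-1,$$ and $$\mathcal{E}(\mathbf c,\mathbf P)\Subset\mathcal{B}(\mathbf 0,1)\iff \ell^*_{\mathbf c,\mathbf P}=-1.$$
   Context: $\mathcal{E}(\mathbf c,\mathbf P)=\{\mathbf x\in\mathbb{R}^n:(\mathbf x-\mathbf c)^\top\mathbf P(\mathbf x-\mathbf c)\le 1\}$; $\mathcal{B}(\mathbf 0,1)=\{\mathbf x:\mathbf x^\top\mathbf x\le1\}$ and $\operatorname{int}\mathcal{B}(\mathbf 0,1)$ is the open unit ball. $\mathcal{E}\Subset\mathcal{E}_0$ means $\mathcal{E}\subseteq\mathcal{E}_0$ and $\partial\mathcal{E}\cap\partial\mathcal{E}_0\neq\emptyset$. Let $\mathbf P=\mathbf V\mathbf D\mathbf V^\top$ be a spectral decomposition with $\mathbf V$ orthogonal and $\mathbf D$ diagonal with entries $\lambda_i=D_{ii}$; let $\bar{\mathbf c}=\mathbf V^\top\mathbf c$, $S(\bar{\mathbf c})=\{i:\bar c_i\ne0\}$, and $\lambda_{\min}(\mathbf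 P)$ the smallest eigenvalue of $\mathbf P$. Set $\mathcal{I}_{\mathbf P}=(\lambda_{\min}(\mathbf P)^{-1},\infty)$ if some $i\in S(\bar{\mathbf c})$ has $\lambda_i=\lambda_{\min}(\mathbf P)$, and $\mathcal{I}_{\mathbf P}=[\lambda_{\min}(\mathbf P)^{-1},\infty)$ otherwise; and $\ell_{\mathbf c,\mathbf P}(\beta)=-\beta-\sum_{i\in S(\bar{\mathbf c})}\bar c_i^2\frac{\lambda_i\beta}{\lambda_i\beta-1}$ for $\beta\in\mathcal{I}_{\mathbf P}$. *)

theory Defs
  imports "HOL-Analysis.Analysis"
begin

definition sym_pos_def_mat :: "real^'n^'n \<Rightarrow> bool" where
  "sym_pos_def_mat P \<longleftrightarrow> transpose P = P \<and> (\<forall>x. x \<noteq> 0 \<longrightarrow> x \<bullet> (P *v x) > 0)"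

definition diagonal_mat :: "real^'n^'n \<Rightarrow> bool" where
  "diagonal_mat D \<longleftrightarrow> (\<forall>i j. i \<noteq> j \<longrightarrow> D $ i $ j = 0)"

definition ellipsoid :: "real^'n \<Rightarrow> real^'n^'n \<Rightarrow> (real^'n) set" where
  "ellipsoid c P = {x. (x - c) \<bullet> (P *v (x - c)) \<le> 1}"

definition unit_ball :: "(real^'n) set" where
  "unit_ball = {x. x \<bullet> x \<le> 1}"

definition inscribed :: "(real^'n) set \<Rightarrow> (real^'n) set \<Rightarrow> bool" where
  "inscribed E E0 \<longleftrightarrow> E \<subseteq> E0 \<and> frontier E \<inter> frontier E0 \<noteq> {}"

definition mat_eigenvalues :: "real^'n^'n \<Rightarrow> real set" where
  "mat_eigenvalues P = {l. \<exists>v. v \<noteq> 0 \<and> P *v v = l *\<^sub>R v}"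

definition lambda_min :: "real^'n^'n \<Rightarrow> real" where
  "lambda_min P = Min (mat_eigenvalues P)"

definition supp_cbar :: "real^'n^'n \<Rightarrow> real^'n \<Rightarrow> 'n set" where
  "supp_cbar V c = {i. (transpose V *v c) $ i \<noteq> 0}"

definition I_P :: "real^'n^'n \<Rightarrow> real^'n^'n \<Rightarrow> real^'n^'n \<Rightarrow> real^'n \<Rightarrow> real set" where
  "I_P P V D c = (if \<exists>i \<in> supp_cbar V c. D $ i $ i = lambda_min P
                  then {inverse (lambda_min P)<..} else {inverse (lambda_min P)..})"

definition ell :: "real^'n^'n \<Rightarrow> real^'n^'n \<Rightarrow> real^'n \<Rightarrow> real \<Rightarrow> real" where
  "ell V D c \<beta> = - \<beta> - (\<Sum>i \<in> supp_cbar V c.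
      ((transpose V *v c) $ i)^2 * (D $ i $ i * \<beta> / (D $ i $ i * \<beta> - 1)))"

definition ell_star :: "real^'n^'n \<Rightarrow> real^'n^'n \<Rightarrow> real^'n^'n \<Rightarrow> real^'n \<Rightarrow> real" where
  "ell_star P V D c = (SUP \<beta> \<in> I_P P V D c. ell V D c \<beta>)"

end

(* In the coordinates y = V^T x the ellipsoid is q(y) = sum_i lambda_i (y_i - cbar_i)^2 <= 1 and
   |x| = |y|, so both claims are about r = max |y|^2 over it: the ellipsoid lies in the open unit
   ball iff r < 1 and is inscribed iff r = 1, because the maximum is attained on its boundary.
   Completing the square in each coordinate gives beta * q(y) - |y|^2 >= beta + ell(beta) for
   beta in I_P, hence r <= -ell(beta) (weak duality).  Conversely the secular equation
   q(y(beta)) = 1 for the minimiser y(beta) of the Lagrangian beta * q(y) - |y|^2 has a root in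
   I_P by the intermediate value theorem, unless q(y(1/lambda_min)) < 1, in which case the
   missing mass can be put on an eigendirection of lambda_min orthogonal to c; either way
   a boundary point with |y|^2 = -ell(beta) exists, so r = -ell^*. *)

theory Submission
  imports Defs "HOL-Real_Asymp.Real_Asymp"
begin

lemma diagonal_mat_mult_vector_nth:
  assumes "diagonal_mat D"
  shows "(D *v w) $ i = D $ i $ i * w $ i"
proof -
  have "(D *v w) $ i = (\<Sum>j\<in>UNIV. D $ i $ j * w $ j)"
    by (simp add: matrix_vector_mult_def)
  also have "\<dots> = (\<Sum>j\<in>UNIV. if j = i then D $ i $ i * w $ i else 0)"
    by (rule sum.cong) (use assms in \<open>auto simp: diagonal_mat_def\<close>)
  finally show ?thesis by simp
qed

lemma inner_matrix_vector_mult: "(z::real^'n) \<bullet> (V *v u) = (transpose V *v z) \<bullet> u"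
  by (simp add: dot_lmul_matrix)

lemma orthogonal_matrix_mult_vector_cancel:
  assumes "orthogonal_matrix (V::real^'n^'n)"
  shows "transpose V *v (V *v y) = y" "V *v (transpose V *v y) = y"
  using assms unfolding orthogonal_matrix_def
  by (simp_all add: matrix_vector_mul_assoc del: transpose_matrix_vector)

lemma inner_self_orthogonal_coordinates:
  assumes "orthogonal_matrix (V::real^'n^'n)"
  shows "x \<bullet> x = (\<Sum>i\<in>UNIV. ((transpose V *v x) $ i)\<^sup>2)"
proof -
  have "x \<bullet> x = x \<bullet> (V *v (transpose V *v x))"
    using orthogonal_matrix_mult_vector_cancel[OF assms] by simp
  also have "\<dots> = (transpose V *v x) \<bullet> (transpose V *v x)"
    by (rule inner_matrix_vector_mult)
  finally show ?thesis by (simp add: inner_vec_def power2_eq_square)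
qed

lemma quadratic_form_diagonalization:
  fixes P V D :: "real^'n^'n"
  assumes "diagonal_mat D" and "P = V ** D ** transpose V"
  shows "z \<bullet> (P *v z) = (\<Sum>i\<in>UNIV. D $ i $ i * ((transpose V *v z) $ i)\<^sup>2)"
proof -
  have "z \<bullet> (P *v z) = (transpose V *v z) \<bullet> (D *v (transpose V *v z))"
    unfolding assms(2) by (simp add: inner_matrix_vector_mult flip: matrix_vector_mul_assoc)
  then show ?thesis
    by (simp add: inner_vec_def diagonal_mat_mult_vector_nth[OF assms(1)] power2_eq_square mult_ac)
qed

lemma mat_eigenvalues_orthogonal_conjugate:
  fixes V D :: "real^'n^'n"
  assumes "orthogonal_matrix V"
  shows "mat_eigenvalues (V ** D ** transpose V) = mat_eigenvalues D"
proof (intro equalityI subsetI)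
  note cancel = orthogonal_matrix_mult_vector_cancel[OF assms]
  fix l
  assume "l \<in> mat_eigenvalues (V ** D ** transpose V)"
  then obtain v where v: "v \<noteq> 0" "V *v (D *v (transpose V *v v)) = l *\<^sub>R v"
    unfolding mat_eigenvalues_def by (auto simp flip: matrix_vector_mul_assoc)
  have nonzero: "transpose V *v v \<noteq> 0" using v(1) by (metis cancel(2) matrix_vector_mult_0_right)
  have "D *v (transpose V *v v) = transpose V *v (V *v (D *v (transpose V *v v)))"
    by (simp only: cancel(1))
  also have "\<dots> = l *\<^sub>R (transpose V *v v)"
    by (simp only: v(2) matrix_vector_mult_scaleR)
  finally show "l \<in> mat_eigenvalues D" using nonzero unfolding mat_eigenvalues_def by blast
next
  note cancel = orthogonal_matrix_mult_vector_cancel[OF assms]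
  fix l
  assume "l \<in> mat_eigenvalues D"
  then obtain w where w: "w \<noteq> 0" "D *v w = l *\<^sub>R w"
    unfolding mat_eigenvalues_def by auto
  have "V *v w \<noteq> 0" using w(1) by (metis cancel(1) matrix_vector_mult_0_right)
  moreover have "(V ** D ** transpose V) *v (V *v w) = l *\<^sub>R (V *v w)"
    by (simp only: matrix_vector_mul_assoc[symmetric] cancel(1) w(2) matrix_vector_mult_scaleR)
  ultimately show "l \<in> mat_eigenvalues (V ** D ** transpose V)"
    unfolding mat_eigenvalues_def by blast
qed

lemma mat_eigenvalues_diagonal_mat:
  assumes "diagonal_mat (D::real^'n^'n)"
  shows "mat_eigenvalues D = range (\<lambda>i. D $ i $ i)"
proof (intro equalityI subsetI)
  fix l assume "l \<in> mat_eigenvalues D"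
  then obtain w where "w \<noteq> 0" and w: "D *v w = l *\<^sub>R w"
    unfolding mat_eigenvalues_def by auto
  then obtain i where "w $ i \<noteq> 0"
    by (metis vec_eq_iff zero_index)
  have "D $ i $ i * w $ i = l * w $ i"
    using w diagonal_mat_mult_vector_nth[OF assms, of w i] by auto
  with \<open>w $ i \<noteq> 0\<close> show "l \<in> range (\<lambda>i. D $ i $ i)" by auto
next
  fix l assume "l \<in> range (\<lambda>i. D $ i $ i)"
  then obtain i where "l = D $ i $ i" by auto
  then have "D *v axis i 1 = l *\<^sub>R axis i 1"
    by (simp add: vec_eq_iff diagonal_mat_mult_vector_nth[OF assms] axis_def)
  moreover have "axis i (1::real) \<noteq> 0" by (simp add: axis_eq_0_iff)
  ultimately show "l \<in> mat_eigenvalues D" unfolding mat_eigenvalues_def by blast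
qed

lemma sym_pos_def_mat_eigenvalue_pos:
  assumes "sym_pos_def_mat P" and "l \<in> mat_eigenvalues P"
  shows "l > 0"
proof -
  obtain v where "v \<noteq> 0" "P *v v = l *\<^sub>R v"
    using assms(2) unfolding mat_eigenvalues_def by auto
  moreover have "v \<bullet> (P *v v) > 0"
    using assms(1) \<open>v \<noteq> 0\<close> unfolding sym_pos_def_mat_def by blast
  ultimately have "l * (v \<bullet> v) > 0" by simp
  moreover have "v \<bullet> v > 0" using \<open>v \<noteq> 0\<close> by simp
  ultimately show ?thesis by (simp add: zero_less_mult_iff)
qed

(* For l * b = 1 both sides vanish only because d = 0 there and x / 0 = 0. *)
lemma completing_square:
  fixes b l y d :: real
  assumes "l * b = 1 \<Longrightarrow> d = 0"
  shows "b * l * (y - d)\<^sup>2 - y\<^sup>2 + d\<^sup>2 * (l * b / (l * b - 1))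
       = (l * b - 1) * (y - b * l * d / (l * b - 1))\<^sup>2"
proof (cases "l * b = 1")
  case True
  then show ?thesis using assms by (simp add: mult.commute)
next
  case False
  define a where "a = l * b - 1"
  have "a \<noteq> 0" using False a_def by simp
  have "a * (b * l * (y - d)\<^sup>2 - y\<^sup>2 + d\<^sup>2 * (l * b / a))
      = a * (b * l * (y - d)\<^sup>2 - y\<^sup>2) + d\<^sup>2 * l * b"
    using \<open>a \<noteq> 0\<close> by (simp add: distrib_left)
  also have "\<dots> = (a * y - b * l * d)\<^sup>2"
    unfolding a_def by (simp add: power2_eq_square algebra_simps)
  also have "\<dots> = (a * (y - b * l * d / a))\<^sup>2"
    using \<open>a \<noteq> 0\<close> by (simp add: right_diff_distrib)
  also have "\<dots> = a * (a * (y - b * l * d / a)\<^sup>2)"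
    by (simp add: power2_eq_square)
  finally show ?thesis using \<open>a \<noteq> 0\<close> unfolding a_def by simp
qed

(* lam and d are the eigenvalues lambda_i and the coordinates cbar_i of V^T c; dual_dom and dual
   are I_P and ell in these coordinates. *)
locale axis_ellipsoid =
  fixes lam d :: "'n::finite \<Rightarrow> real"
  assumes lam_pos: "\<And>i. lam i > 0"
begin

definition quad :: "('n \<Rightarrow> real) \<Rightarrow> real" where
  "quad y = (\<Sum>i\<in>UNIV. lam i * (y i - d i)\<^sup>2)"

definition lmin :: real where
  "lmin = Min (range lam)"

definition csupp :: "'n set" where
  "csupp = {i. d i \<noteq> 0}"

definition dual_dom :: "real set" where
  "dual_dom = (if \<exists>i\<in>csupp. lam i = lmin then {inverse lmin<..} else {inverse lmin..})"

definition dual :: "real \<Rightarrow> real" where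
  "dual \<beta> = - \<beta> - (\<Sum>i\<in>csupp. (d i)\<^sup>2 * (lam i * \<beta> / (lam i * \<beta> - 1)))"

(* The minimiser of the Lagrangian beta * quad y - |y|^2. *)
definition kkt_point :: "real \<Rightarrow> 'n \<Rightarrow> real" where
  "kkt_point \<beta> i = \<beta> * lam i * d i / (lam i * \<beta> - 1)"

definition secular :: "real \<Rightarrow> real" where
  "secular \<beta> = (\<Sum>i\<in>csupp. lam i * (d i)\<^sup>2 / (lam i * \<beta> - 1)\<^sup>2)"

lemma lmin_le: "lmin \<le> lam i"
  unfolding lmin_def by simp

lemma lmin_pos: "lmin > 0"
  unfolding lmin_def using lam_pos by (simp add: Min_gr_iff)

lemma lmin_attained: obtains j where "lam j = lmin"
proof -
  have "lmin \<in> range lam" unfolding lmin_def by (rule Min_in) auto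
  then show ?thesis using that by auto
qed

lemma dual_dom_ge: "\<beta> \<in> dual_dom \<Longrightarrow> inverse lmin \<le> \<beta>"
  unfolding dual_dom_def by (auto split: if_splits)

lemma dual_dom_upward: "\<beta> \<in> dual_dom \<Longrightarrow> \<beta> \<le> \<beta>' \<Longrightarrow> \<beta>' \<in> dual_dom"
  unfolding dual_dom_def by (auto split: if_splits)

lemma dual_dom_pos: "\<beta> \<in> dual_dom \<Longrightarrow> \<beta> > 0"
  using dual_dom_ge lmin_pos by (meson inverse_positive_iff_positive less_le_trans)

lemma dual_dom_lmin_ge_one: "\<beta> \<in> dual_dom \<Longrightarrow> lmin * \<beta> \<ge> 1"
  using dual_dom_ge lmin_pos by (simp add: field_simps)

lemma dual_dom_lam_ge_one: "\<beta> \<in> dual_dom \<Longrightarrow> lam i * \<beta> \<ge> 1"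
proof -
  assume "\<beta> \<in> dual_dom"
  then have "lmin * \<beta> \<le> lam i * \<beta>"
    using dual_dom_pos lmin_le by (simp add: mult_right_mono)
  with dual_dom_lmin_ge_one[OF \<open>\<beta> \<in> dual_dom\<close>] show ?thesis by linarith
qed

lemma dual_dom_no_pole:
  assumes "\<beta> \<in> dual_dom" and "lam i * \<beta> = 1"
  shows "d i = 0"
proof (rule ccontr)
  assume "d i \<noteq> 0"
  have "lam i = lmin"
  proof (rule ccontr)
    assume "lam i \<noteq> lmin"
    then have "lam i * \<beta> > lmin * \<beta>"
      using lmin_le[of i] dual_dom_pos[OF assms(1)] by simp
    with assms dual_dom_lmin_ge_one show False by fastforce
  qed
  with \<open>d i \<noteq> 0\<close> have "dual_dom = {inverse lmin<..}"
    unfolding dual_dom_def csupp_def by auto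
  then have "lmin * \<beta> > 1" using assms(1) lmin_pos by (simp add: field_simps)
  with assms(2) \<open>lam i = lmin\<close> show False by simp
qed

lemma dual_gap_identity:
  assumes "\<beta> \<in> dual_dom"
  shows "\<beta> * quad y - (\<Sum>i\<in>UNIV. (y i)\<^sup>2)
       = \<beta> + dual \<beta> + (\<Sum>i\<in>UNIV. (lam i * \<beta> - 1) * (y i - kkt_point \<beta> i)\<^sup>2)"
proof -
  let ?frac = "\<lambda>i. (d i)\<^sup>2 * (lam i * \<beta> / (lam i * \<beta> - 1))"
  have frac_csupp: "(\<Sum>i\<in>UNIV. ?frac i) = (\<Sum>i\<in>csupp. ?frac i)"
    by (rule sum.mono_neutral_right) (auto simp: csupp_def)
  have "\<beta> * quad y - (\<Sum>i\<in>UNIV. (y i)\<^sup>2) = (\<Sum>i\<in>UNIV. \<beta> * lam i * (y i - d i)\<^sup>2 - (y i)\<^sup>2)"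
    unfolding quad_def by (simp add: sum_subtractf sum_distrib_left mult.assoc)
  also have "\<dots> = (\<Sum>i\<in>UNIV. (lam i * \<beta> - 1) * (y i - kkt_point \<beta> i)\<^sup>2 - ?frac i)"
  proof (intro sum.cong refl)
    fix i
    show "\<beta> * lam i * (y i - d i)\<^sup>2 - (y i)\<^sup>2
        = (lam i * \<beta> - 1) * (y i - kkt_point \<beta> i)\<^sup>2 - ?frac i"
      using completing_square[of "lam i" \<beta> "d i" "y i", OF dual_dom_no_pole[OF assms]]
      unfolding kkt_point_def by linarith
  qed
  also have "\<dots> = \<beta> + dual \<beta> + (\<Sum>i\<in>UNIV. (lam i * \<beta> - 1) * (y i - kkt_point \<beta> i)\<^sup>2)"
    unfolding dual_def using frac_csupp by (simp add: sum_subtractf)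
  finally show ?thesis .
qed

lemma weak_duality:
  assumes "\<beta> \<in> dual_dom" and "quad y \<le> 1"
  shows "(\<Sum>i\<in>UNIV. (y i)\<^sup>2) \<le> - dual \<beta>"
proof -
  have "(\<Sum>i\<in>UNIV. (lam i * \<beta> - 1) * (y i - kkt_point \<beta> i)\<^sup>2) \<ge> 0"
    using dual_dom_lam_ge_one[OF assms(1)] by (intro sum_nonneg) simp
  moreover have "\<beta> * quad y \<le> \<beta>"
    using assms dual_dom_pos[OF assms(1)] by (simp add: mult_left_le)
  ultimately show ?thesis using dual_gap_identity[OF assms(1), of y] by linarith
qed

lemma weak_duality_eq:
  assumes "\<beta> \<in> dual_dom" and "quad y = 1"
    and "\<And>i. y i = kkt_point \<beta> i \<or> lam i * \<beta> = 1"
  shows "(\<Sum>i\<in>UNIV. (y i)\<^sup>2) = - dual \<beta>"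
proof -
  have "(\<Sum>i\<in>UNIV. (lam i * \<beta> - 1) * (y i - kkt_point \<beta> i)\<^sup>2) = 0"
  proof (intro sum.neutral ballI)
    fix i
    show "(lam i * \<beta> - 1) * (y i - kkt_point \<beta> i)\<^sup>2 = 0"
      using assms(3)[of i] by auto
  qed
  then show ?thesis using dual_gap_identity[OF assms(1), of y] assms(2) by simp
qed

lemma quad_kkt_point:
  assumes "\<beta> \<in> dual_dom"
  shows "quad (kkt_point \<beta>) = secular \<beta>"
proof -
  have "lam i * (kkt_point \<beta> i - d i)\<^sup>2 = lam i * (d i)\<^sup>2 / (lam i * \<beta> - 1)\<^sup>2" for i
  proof (cases "lam i * \<beta> = 1")
    case True
    then show ?thesis using dual_dom_no_pole[OF assms] by (simp add: kkt_point_def)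
  next
    case False
    then have "kkt_point \<beta> i - d i = d i / (lam i * \<beta> - 1)"
      by (simp add: kkt_point_def field_simps)
    then show ?thesis by (simp add: power_divide)
  qed
  then have "quad (kkt_point \<beta>) = (\<Sum>i\<in>UNIV. lam i * (d i)\<^sup>2 / (lam i * \<beta> - 1)\<^sup>2)"
    by (simp add: quad_def)
  also have "\<dots> = secular \<beta>"
    unfolding secular_def by (rule sum.mono_neutral_right) (auto simp: csupp_def)
  finally show ?thesis .
qed

lemma secular_continuous_on:
  assumes "\<forall>i\<in>csupp. lam i * a > 1"
  shows "continuous_on {a..} secular"
proof -
  have "lam i * \<beta> - 1 \<noteq> 0" if "i \<in> csupp" "a \<le> \<beta>" for i \<beta>
  proof -
    have "lam i * a \<le> lam i * \<beta>" using that lam_pos[of i] by simp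
    then show ?thesis using assms that by fastforce
  qed
  then show ?thesis unfolding secular_def by (intro continuous_intros) auto
qed

lemma secular_tendsto_0: "(secular \<longlongrightarrow> 0) at_top"
proof -
  have "((\<lambda>\<beta>. lam i * (d i)\<^sup>2 / (lam i * \<beta> - 1)\<^sup>2) \<longlongrightarrow> 0) at_top" for i
    using lam_pos[of i] by real_asymp
  then show ?thesis unfolding secular_def by (intro tendsto_null_sum)
qed

lemma secular_root:
  assumes "a \<in> dual_dom" and "\<forall>i\<in>csupp. lam i * a > 1" and "secular a \<ge> 1"
  shows "\<exists>\<beta>\<in>dual_dom. secular \<beta> = 1"
proof -
  have "\<forall>\<^sub>F \<beta> in at_top. a \<le> \<beta> \<and> secular \<beta> < 1"
    using eventually_ge_at_top order_tendstoD(2)[OF secular_tendsto_0] by (intro eventually_conj) auto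
  then obtain b where "a \<le> b" "secular b \<le> 1"
    by (auto simp: eventually_at_top_linorder intro: less_imp_le)
  moreover have "continuous_on {a..b} secular"
    using secular_continuous_on[OF assms(2)] by (rule continuous_on_subset) auto
  ultimately obtain \<beta> where "a \<le> \<beta>" "secular \<beta> = 1"
    using IVT2'[of secular b 1 a] assms(3) by auto
  then show ?thesis using dual_dom_upward[OF assms(1)] by blast
qed

lemma secular_root_at_pole:
  assumes "i0 \<in> csupp" and "lam i0 = lmin"
  shows "\<exists>\<beta>\<in>dual_dom. secular \<beta> = 1"
proof -
  define \<epsilon> where "\<epsilon> = min 1 (lmin * (d i0)\<^sup>2)"
  have "\<epsilon> > 0" using assms(1) lmin_pos by (auto simp: \<epsilon>_def csupp_def)
  have "\<epsilon> \<le> 1" by (simp add: \<epsilon>_def)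
  then have "\<epsilon>\<^sup>2 \<le> \<epsilon>" using \<open>\<epsilon> > 0\<close> by (simp add: power2_eq_square mult_left_le)
  also have "\<dots> \<le> lmin * (d i0)\<^sup>2" by (simp add: \<epsilon>_def)
  finally have \<epsilon>_sq: "\<epsilon>\<^sup>2 \<le> lmin * (d i0)\<^sup>2" .
  define a where "a = (1 + \<epsilon>) / lmin"
  have lmin_a: "lmin * a = 1 + \<epsilon>" using lmin_pos by (simp add: a_def)
  have "dual_dom = {inverse lmin<..}" using assms by (auto simp: dual_dom_def)
  then have "a \<in> dual_dom" using lmin_a \<open>\<epsilon> > 0\<close> lmin_pos by (simp add: field_simps)
  moreover have "lam i * a > 1" for i
  proof -
    have "lmin * a \<le> lam i * a"
      using lmin_le[of i] lmin_a lmin_pos \<open>\<epsilon> > 0\<close> by (intro mult_right_mono) (auto simp: a_def)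
    then show ?thesis using lmin_a \<open>\<epsilon> > 0\<close> by linarith
  qed
  moreover have "1 \<le> secular a"
  proof -
    have "1 \<le> lam i0 * (d i0)\<^sup>2 / (lam i0 * a - 1)\<^sup>2"
      using assms(2) lmin_a \<epsilon>_sq \<open>\<epsilon> > 0\<close> by simp
    also have "\<dots> \<le> secular a"
      unfolding secular_def using assms(1) lam_pos[THEN less_imp_le] by (intro member_le_sum) auto
    finally show ?thesis .
  qed
  ultimately show ?thesis by (intro secular_root) auto
qed

lemma secular_root_off_pole:
  assumes "\<forall>i\<in>csupp. lam i \<noteq> lmin" and "secular (inverse lmin) \<ge> 1"
  shows "\<exists>\<beta>\<in>dual_dom. secular \<beta> = 1"
proof (rule secular_root)
  show "inverse lmin \<in> dual_dom" using assms(1) by (simp add: dual_dom_def)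
  show "\<forall>i\<in>csupp. lam i * inverse lmin > 1"
    using assms(1) lmin_le lmin_pos by (auto simp: field_simps order.strict_iff_order)
qed (use assms(2) in simp)

(* The secular equation has no root in dual_dom; the missing mass goes to a coordinate j of the
   smallest eigenvalue, where d j = 0 and lam j * inverse lmin = 1 leave y j free. *)
lemma degenerate_maximizer:
  assumes "\<forall>i\<in>csupp. lam i \<noteq> lmin" and "secular (inverse lmin) < 1"
  shows "\<exists>y. quad y = 1 \<and> (\<forall>i. y i = kkt_point (inverse lmin) i \<or> lam i * inverse lmin = 1)"
proof -
  let ?\<beta> = "inverse lmin"
  obtain j where j: "lam j = lmin" using lmin_attained .
  then have "d j = 0" using assms(1) by (auto simp: csupp_def)
  then have kkt_j: "kkt_point ?\<beta> j = 0" by (simp add: kkt_point_def)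
  have "?\<beta> \<in> dual_dom" using assms(1) by (simp add: dual_dom_def)
  define t where "t = sqrt ((1 - secular ?\<beta>) / lmin)"
  have lam_t: "lam j * t\<^sup>2 = 1 - secular ?\<beta>"
    using assms(2) lmin_pos j by (simp add: t_def)
  define y where "y = (kkt_point ?\<beta>)(j := t)"
  have "quad y = (\<Sum>i\<in>UNIV. lam i * (kkt_point ?\<beta> i - d i)\<^sup>2 + (if i = j then lam j * t\<^sup>2 else 0))"
    unfolding quad_def by (rule sum.cong) (auto simp: y_def kkt_j \<open>d j = 0\<close>)
  also have "\<dots> = quad (kkt_point ?\<beta>) + lam j * t\<^sup>2"
    by (simp add: sum.distrib quad_def)
  also have "\<dots> = 1"
    using quad_kkt_point[OF \<open>?\<beta> \<in> dual_dom\<close>] lam_t by simp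
  finally have "quad y = 1" .
  moreover have "y i = kkt_point ?\<beta> i \<or> lam i * ?\<beta> = 1" for i
    using j lmin_pos by (auto simp: y_def)
  ultimately show ?thesis by blast
qed

lemma strong_duality:
  "\<exists>\<beta>\<in>dual_dom. \<exists>y. quad y = 1 \<and> (\<forall>i. y i = kkt_point \<beta> i \<or> lam i * \<beta> = 1)"
proof -
  have from_root: ?thesis if "\<exists>\<beta>\<in>dual_dom. secular \<beta> = 1"
    using that quad_kkt_point by metis
  consider (pole) "\<exists>i\<in>csupp. lam i = lmin"
    | (root) "\<forall>i\<in>csupp. lam i \<noteq> lmin" "secular (inverse lmin) \<ge> 1"
    | (degenerate) "\<forall>i\<in>csupp. lam i \<noteq> lmin" "secular (inverse lmin) < 1"
    by fastforce
  then show ?thesis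
  proof cases
    case pole
    then show ?thesis using secular_root_at_pole from_root by blast
  next
    case root
    then show ?thesis using secular_root_off_pole from_root by blast
  next
    case degenerate
    moreover have "inverse lmin \<in> dual_dom" using degenerate by (simp add: dual_dom_def)
    ultimately show ?thesis using degenerate_maximizer by blast
  qed
qed

lemma max_sum_squares_eq_dual_Sup:
  obtains y0 where "quad y0 = 1"
    and "\<And>y. quad y \<le> 1 \<Longrightarrow> (\<Sum>i\<in>UNIV. (y i)\<^sup>2) \<le> (\<Sum>i\<in>UNIV. (y0 i)\<^sup>2)"
    and "(SUP \<beta>\<in>dual_dom. dual \<beta>) = - (\<Sum>i\<in>UNIV. (y0 i)\<^sup>2)"
proof -
  obtain \<beta>0 y0 where \<beta>0: "\<beta>0 \<in> dual_dom" and y0: "quad y0 = 1"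
    and kkt: "\<forall>i. y0 i = kkt_point \<beta>0 i \<or> lam i * \<beta>0 = 1"
    using strong_duality by blast
  have y0_dual: "(\<Sum>i\<in>UNIV. (y0 i)\<^sup>2) = - dual \<beta>0"
    using weak_duality_eq[OF \<beta>0 y0] kkt by blast
  have "(SUP \<beta>\<in>dual_dom. dual \<beta>) = dual \<beta>0"
  proof (rule cSup_eq_maximum)
    show "dual \<beta>0 \<in> dual ` dual_dom" using \<beta>0 by simp
    show "x \<le> dual \<beta>0" if "x \<in> dual ` dual_dom" for x
      using that weak_duality[of _ y0] y0 y0_dual by fastforce
  qed
  then show ?thesis
    using that[OF y0] weak_duality[OF \<beta>0] y0_dual by simp
qed

end

lemma ellipsoid_level_in_frontier:
  assumes "(x - c) \<bullet> (P *v (x - c)) = 1"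
  shows "x \<in> frontier (ellipsoid c P)"
proof -
  let ?E = "ellipsoid c P" and ?ray = "\<lambda>t::real. x + t *\<^sub>R (x - c)"
  have outside: "?ray t \<notin> ?E" if "t > 0" for t
  proof -
    have "?ray t - c = (1 + t) *\<^sub>R (x - c)" by (simp add: algebra_simps)
    then have "(?ray t - c) \<bullet> (P *v (?ray t - c)) = (1 + t)\<^sup>2"
      using assms by (simp add: matrix_vector_mult_scaleR power2_eq_square)
    moreover have "(1 + t)\<^sup>2 > 1\<^sup>2" using that by (intro power_strict_mono) auto
    ultimately show ?thesis unfolding ellipsoid_def by simp
  qed
  have "x \<notin> interior ?E"
  proof
    assume "x \<in> interior ?E"
    moreover have "(?ray \<longlongrightarrow> x + 0 *\<^sub>R (x - c)) (at_right 0)"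
      by (intro tendsto_intros)
    ultimately have "\<forall>\<^sub>F t in at_right 0. ?ray t \<in> interior ?E"
      using topological_tendstoD[OF _ open_interior] by simp
    then have "\<forall>\<^sub>F t in at_right 0. ?ray t \<in> ?E"
      by (rule eventually_mono) (use interior_subset in blast)
    moreover have "\<forall>\<^sub>F t in at_right (0::real). t > 0"
      by (simp add: eventually_at_right_less)
    ultimately have "\<forall>\<^sub>F t in at_right (0::real). False"
      by eventually_elim (use outside in blast)
    then show False by (simp add: trivial_limit_at_right_real)
  qed
  moreover have "x \<in> ?E" using assms unfolding ellipsoid_def by simp
  ultimately show ?thesis
    unfolding frontier_def using closure_subset by blast
qed

lemma subset_ball_iff_norm_maximizer:
  fixes E :: "'a::real_normed_vector set"
  assumes "x0 \<in> E" and "\<forall>x\<in>E. norm x \<le> norm x0"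
  shows "E \<subseteq> ball 0 r \<longleftrightarrow> norm x0 < r"
  using assms by (fastforce simp: subset_iff)

lemma inscribed_cball_iff_norm_maximizer:
  fixes E :: "'a::real_normed_vector set"
  assumes "x0 \<in> E" and "x0 \<in> frontier E" and "\<forall>x\<in>E. norm x \<le> norm x0"
  shows "E \<subseteq> cball 0 r \<and> frontier E \<inter> sphere 0 r \<noteq> {} \<longleftrightarrow> norm x0 = r"
proof
  assume touch: "E \<subseteq> cball 0 r \<and> frontier E \<inter> sphere 0 r \<noteq> {}"
  then obtain z where z: "z \<in> frontier E" "z \<in> sphere 0 r" by blast
  have "E \<subseteq> cball 0 (norm x0)" using assms(3) by auto
  then have "closure E \<subseteq> cball 0 (norm x0)" by (rule closure_minimal) simp
  moreover have "z \<in> closure E" using z(1) by (simp add: frontier_def)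
  ultimately have "r \<le> norm x0" using z(2) by auto
  moreover have "norm x0 \<le> r" using touch assms(1) by auto
  ultimately show "norm x0 = r" by simp
next
  assume "norm x0 = r"
  then have "x0 \<in> frontier E \<inter> sphere 0 r" and "E \<subseteq> cball 0 r"
    using assms by auto
  then show "E \<subseteq> cball 0 r \<and> frontier E \<inter> sphere 0 r \<noteq> {}" by blast
qed

lemma unit_ball_eq_cball: "unit_ball = cball (0::real^'n) 1"
  unfolding unit_ball_def by (auto simp flip: power2_norm_eq_inner simp: abs_square_le_1)

lemma ellipsoid_norm_maximizer:
  fixes P V D :: "real^'n^'n" and c :: "real^'n"
  assumes "sym_pos_def_mat P"
    and "orthogonal_matrix V" and "diagonal_mat D" and "P = V ** D ** transpose V"
  obtains x0 where "x0 \<in> ellipsoid c P" and "x0 \<in> frontier (ellipsoid c P)"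
    and "\<forall>x\<in>ellipsoid c P. norm x \<le> norm x0" and "ell_star P V D c = - (norm x0)\<^sup>2"
proof -
  have eigenvalues: "mat_eigenvalues P = range (\<lambda>i. D $ i $ i)"
    unfolding assms(4) mat_eigenvalues_orthogonal_conjugate[OF assms(2)]
    by (rule mat_eigenvalues_diagonal_mat[OF assms(3)])
  interpret axis_ellipsoid "\<lambda>i. D $ i $ i" "\<lambda>i. (transpose V *v c) $ i"
    by unfold_locales (use sym_pos_def_mat_eigenvalue_pos[OF assms(1)] eigenvalues in auto)
  let ?E = "ellipsoid c P" and ?coords = "\<lambda>x i. (transpose V *v x) $ i"
  have form_eq: "(x - c) \<bullet> (P *v (x - c)) = quad (?coords x)" for x
    unfolding quadratic_form_diagonalization[OF assms(3,4)] quad_def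
    by (simp add: matrix_vector_mult_diff_distrib)
  have norm_eq: "(norm x)\<^sup>2 = (\<Sum>i\<in>UNIV. (?coords x i)\<^sup>2)" for x
    using inner_self_orthogonal_coordinates[OF assms(2)] by (simp add: power2_norm_eq_inner)
  have "lambda_min P = lmin"
    unfolding lambda_min_def eigenvalues lmin_def ..
  then have ell_star_eq: "ell_star P V D c = (SUP \<beta>\<in>dual_dom. dual \<beta>)"
    unfolding ell_star_def I_P_def ell_def dual_dom_def dual_def supp_cbar_def csupp_def
    by presburger
  obtain y0 where y0: "quad y0 = 1"
    and y0_max: "\<And>y. quad y \<le> 1 \<Longrightarrow> (\<Sum>i\<in>UNIV. (y i)\<^sup>2) \<le> (\<Sum>i\<in>UNIV. (y0 i)\<^sup>2)"
    and y0_Sup: "(SUP \<beta>\<in>dual_dom. dual \<beta>) = - (\<Sum>i\<in>UNIV. (y0 i)\<^sup>2)"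
    using max_sum_squares_eq_dual_Sup by blast
  define x0 where "x0 = V *v (\<chi> i. y0 i)"
  have coords_x0: "?coords x0 = y0"
    unfolding x0_def orthogonal_matrix_mult_vector_cancel[OF assms(2)] by simp
  have x0_level: "(x0 - c) \<bullet> (P *v (x0 - c)) = 1"
    unfolding form_eq coords_x0 by (rule y0)
  have norm_x0: "(norm x0)\<^sup>2 = (\<Sum>i\<in>UNIV. (y0 i)\<^sup>2)"
    unfolding norm_eq coords_x0 ..
  show ?thesis
  proof
    show "x0 \<in> ?E" using x0_level by (simp add: ellipsoid_def)
    show "x0 \<in> frontier ?E" using x0_level by (rule ellipsoid_level_in_frontier)
    show "\<forall>x\<in>?E. norm x \<le> norm x0"
    proof
      fix x assume "x \<in> ?E"
      then have "(norm x)\<^sup>2 \<le> (norm x0)\<^sup>2"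
        unfolding norm_eq[of x] norm_x0 using y0_max form_eq by (simp add: ellipsoid_def)
      then show "norm x \<le> norm x0" by (rule power2_le_imp_le) simp
    qed
    show "ell_star P V D c = - (norm x0)\<^sup>2"
      using ell_star_eq y0_Sup norm_x0 by simp
  qed
qed

theorem theorem1:
  fixes P V D :: "real^'n^'n" and c :: "real^'n"
  assumes "sym_pos_def_mat P"
    and "orthogonal_matrix V" and "diagonal_mat D" and "P = V ** D ** transpose V"
  shows "(ellipsoid c P \<subseteq> interior unit_ball \<longleftrightarrow> ell_star P V D c > -1)
       \<and> (inscribed (ellipsoid c P) unit_ball \<longleftrightarrow> ell_star P V D c = -1)"
proof -
  obtain x0 where x0_E: "x0 \<in> ellipsoid c P" and x0_frontier: "x0 \<in> frontier (ellipsoid c P)"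
    and x0_max: "\<forall>x\<in>ellipsoid c P. norm x \<le> norm x0"
    and ell_star_eq: "ell_star P V D c = - (norm x0)\<^sup>2"
    using ellipsoid_norm_maximizer[OF assms] .
  have "(norm x0)\<^sup>2 < 1 \<longleftrightarrow> norm x0 < 1" and "(norm x0)\<^sup>2 = 1 \<longleftrightarrow> norm x0 = 1"
    by (simp_all add: abs_square_less_1 abs_square_eq_1)
  then show ?thesis
    using subset_ball_iff_norm_maximizer[OF x0_E x0_max, of 1]
      inscribed_cball_iff_norm_maximizer[OF x0_E x0_frontier x0_max, of 1]
    unfolding inscribed_def unit_ball_eq_cball ell_star_eq by auto
qed

end
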